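(* Let $n\ge1$, $\boldsymbol\mu=(\mu_1,\dots,\mu_n)\in[0,1]^n$ and let $c$ be a positive integer. Let $\Omega=\{\mathbf{w}\in\{0,1\}^n:\sum_{i=1}^n w_i\ge c\}$. Then $$\max_{P\in\mathfrak{P}_{\boldsymbol\mu}}P(\Omega)=P^*_{\boldsymbol\mu}(\Omega).$$
   Context: $\mathfrak{P}$ is the set of probability distributions $P$ on $\{0,1\}^n$, written via conditionals as $P(\mathbf{w})=p_1(w_1)p_2(w_2|w_1)\cdots p_n(w_n|w_{n-1},\dots,w_1)$. $\mathfrak{P}_{\boldsymbol\mu}$ is the set of $P\in\mathfrak{P}$ such that $p_i(1|w_{i-1},\dots,w_1)\le\mu_i$ for every $i\in\{1,\dots,n\}$ and every history $(w_1,\dots,w_{i-1})\in\{0,1\}^{i-1}$ (for $i=1$: $p_1(1)\le\mu_1$). $P^*_{\boldsymbol\mu}$ is the product distribution $P^*_{\boldsymbol\mu}(\mathbf{w})=\prod_{i=1}^n p_i^*(w_i)$ with $p_i^*(1)=\mu_i$, $p_i^*(0)=1-\mu_i$. *)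

theory Defs
  imports Complex_Main
begin

text \<open>Words in {0,1}^n are boolean lists of length n (True = 1).
  Coordinates are 0-indexed: w ! i is w_(i+1), mu i is mu_(i+1).\<close>

definition words :: "nat \<Rightarrow> bool list set" where
  "words n = {w. length w = n}"

text \<open>Distribution on {0,1}^n given by conditional kernels: q i h = p_(i+1)(1 | h),
  where h is the history (w_1,...,w_i).\<close>
definition cond_prob :: "nat \<Rightarrow> (nat \<Rightarrow> bool list \<Rightarrow> real) \<Rightarrow> bool list \<Rightarrow> real" where
  "cond_prob n q w = (\<Prod>i<n. if w ! i then q i (take i w) else 1 - q i (take i w))"

definition Pmu :: "nat \<Rightarrow> (nat \<Rightarrow> real) \<Rightarrow> (bool list \<Rightarrow> real) set" where
  "Pmu n mu = {P. \<exists>q. (\<forall>i h. 0 \<le> q i h \<and> q i h \<le> 1)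
      \<and> (\<forall>i<n. \<forall>h. length h = i \<longrightarrow> q i h \<le> mu i)
      \<and> (\<forall>w \<in> words n. P w = cond_prob n q w)}"

definition Pstar :: "nat \<Rightarrow> (nat \<Rightarrow> real) \<Rightarrow> bool list \<Rightarrow> real" where
  "Pstar n mu w = (\<Prod>i<n. if w ! i then mu i else 1 - mu i)"

definition prob_of :: "(bool list \<Rightarrow> real) \<Rightarrow> bool list set \<Rightarrow> real" where
  "prob_of P A = (\<Sum>w\<in>A. P w)"

definition Omega :: "nat \<Rightarrow> nat \<Rightarrow> bool list set" where
  "Omega n c = {w \<in> words n. c \<le> card {i. i < n \<and> w ! i}}"

end

theory Submission
  imports Defs
begin

text \<open>Conditioning on the first coordinate gives the recursion
  P(at least c ones) = q1 P1(at least c-1 ones) + (1 - q1) P0(at least c ones),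
  where q1 = P(w1 = 1) and P1, P0 are the conditional laws of the remaining coordinates.
  By induction both conditional terms are bounded by the corresponding values of the
  product law, and for the product law the value is antitone in c. Hence the bound is a
  mixture that increases with q1, so it is largest when q1 = mu1.\<close>

definition kernel_after :: "bool \<Rightarrow> (nat \<Rightarrow> bool list \<Rightarrow> real) \<Rightarrow> nat \<Rightarrow> bool list \<Rightarrow> real" where
  "kernel_after b q = (\<lambda>i h. q (Suc i) (b # h))"

fun prob_at_least :: "nat \<Rightarrow> (nat \<Rightarrow> bool list \<Rightarrow> real) \<Rightarrow> nat \<Rightarrow> real" where
  "prob_at_least 0 q c = (if c = 0 then 1 else 0)"
| "prob_at_least (Suc n) q c =
     q 0 [] * prob_at_least n (kernel_after True q) (c - 1)
     + (1 - q 0 []) * prob_at_least n (kernel_after False q) c"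

definition kernel_bounded :: "nat \<Rightarrow> (nat \<Rightarrow> bool list \<Rightarrow> real) \<Rightarrow> (nat \<Rightarrow> real) \<Rightarrow> bool" where
  "kernel_bounded n q mu \<longleftrightarrow> (\<forall>i<n. \<forall>h. length h = i \<longrightarrow> 0 \<le> q i h \<and> q i h \<le> mu i)"

lemma kernel_bounded_after:
  "kernel_bounded (Suc n) q mu \<Longrightarrow> kernel_bounded n (kernel_after b q) (\<lambda>i. mu (Suc i))"
  by (auto simp: kernel_bounded_def kernel_after_def)

lemma Omega_eq: "Omega n c = {w. length w = n \<and> c \<le> length (filter id w)}"
  unfolding Omega_def words_def by (auto simp: length_filter_conv_card)

lemma finite_Omega: "finite (Omega n c)"
proof -
  have "Omega n c \<subseteq> {w. set w \<subseteq> UNIV \<and> length w = n}" by (auto simp: Omega_eq)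
  then show ?thesis using finite_lists_length_eq[of "UNIV :: bool set" n] finite_subset by auto
qed

lemma Omega_Suc:
  "Omega (Suc n) c = Cons True ` Omega n (c - 1) \<union> Cons False ` Omega n c"
proof (rule set_eqI)
  fix w
  show "w \<in> Omega (Suc n) c \<longleftrightarrow> w \<in> Cons True ` Omega n (c - 1) \<union> Cons False ` Omega n c"
    by (cases w) (auto simp: Omega_eq)
qed

lemma cond_prob_Cons:
  "cond_prob (Suc n) q (b # w) = (if b then q 0 [] else 1 - q 0 []) * cond_prob n (kernel_after b q) w"
  unfolding cond_prob_def kernel_after_def prod.lessThan_Suc_shift
  by (auto intro!: prod.cong arg_cong2[where f="(*)"])

lemma prob_of_cond_prob_Omega: "prob_of (cond_prob n q) (Omega n c) = prob_at_least n q c"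
proof (induction n arbitrary: q c)
  case 0
  have "Omega 0 c = (if c = 0 then {[]} else {})" by (auto simp: Omega_eq)
  then show ?case by (simp add: prob_of_def cond_prob_def)
next
  case (Suc n)
  have "prob_of (cond_prob (Suc n) q) (Omega (Suc n) c)
      = sum (cond_prob (Suc n) q) (Cons True ` Omega n (c - 1))
        + sum (cond_prob (Suc n) q) (Cons False ` Omega n c)"
    unfolding prob_of_def Omega_Suc by (rule sum.union_disjoint) (auto simp: finite_Omega)
  also have "\<dots> = q 0 [] * prob_of (cond_prob n (kernel_after True q)) (Omega n (c - 1))
        + (1 - q 0 []) * prob_of (cond_prob n (kernel_after False q)) (Omega n c)"
    by (simp add: sum.reindex cond_prob_Cons prob_of_def sum_distrib_left)
  finally show ?case by (simp add: Suc.IH)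
qed

lemma prob_at_least_antimono:
  assumes "kernel_bounded n q (\<lambda>_. 1)" and "c' \<le> c"
  shows "prob_at_least n q c \<le> prob_at_least n q c'"
  using assms
proof (induction n arbitrary: q c c')
  case 0
  then show ?case by auto
next
  case (Suc n)
  have q0: "0 \<le> q 0 []" "q 0 [] \<le> 1" using Suc.prems(1) by (auto simp: kernel_bounded_def)
  have "prob_at_least n (kernel_after True q) (c - 1) \<le> prob_at_least n (kernel_after True q) (c' - 1)"
    "prob_at_least n (kernel_after False q) c \<le> prob_at_least n (kernel_after False q) c'"
    using Suc.IH kernel_bounded_after[OF Suc.prems(1)] Suc.prems(2) by auto
  with q0 show ?case by (simp add: add_mono mult_left_mono)
qed

lemma prob_at_least_le_product:
  assumes "kernel_bounded n q mu" and "\<forall>i<n. 0 \<le> mu i \<and> mu i \<le> 1"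
  shows "prob_at_least n q c \<le> prob_at_least n (\<lambda>i _. mu i) c"
  using assms
proof (induction n arbitrary: q mu c)
  case 0
  then show ?case by simp
next
  case (Suc n)
  have q0: "0 \<le> q 0 []" "q 0 [] \<le> mu 0" "mu 0 \<le> 1" using Suc.prems by (auto simp: kernel_bounded_def)
  define A where "A = prob_at_least n (\<lambda>i _. mu (Suc i)) (c - 1)"
  define B where "B = prob_at_least n (\<lambda>i _. mu (Suc i)) c"
  have "prob_at_least n (kernel_after True q) (c - 1) \<le> A"
    "prob_at_least n (kernel_after False q) c \<le> B"
    unfolding A_def B_def using Suc.IH kernel_bounded_after[OF Suc.prems(1)] Suc.prems(2) by auto
  with q0 have "prob_at_least (Suc n) q c \<le> q 0 [] * A + (1 - q 0 []) * B"
    by (simp add: add_mono mult_left_mono)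
  also have "\<dots> = B + q 0 [] * (A - B)" by algebra
  also have "\<dots> \<le> B + mu 0 * (A - B)"
  proof -
    have "kernel_bounded n (\<lambda>i _. mu (Suc i)) (\<lambda>_. 1)"
      using Suc.prems q0 by (auto simp: kernel_bounded_def kernel_after_def)
    then have "B \<le> A" unfolding A_def B_def by (rule prob_at_least_antimono) simp
    with q0 show ?thesis by (simp add: mult_right_mono)
  qed
  also have "\<dots> = prob_at_least (Suc n) (\<lambda>i _. mu i) c"
    by (simp add: A_def B_def kernel_after_def algebra_simps)
  finally show ?case .
qed

lemma Pstar_eq_cond_prob: "Pstar n mu = cond_prob n (\<lambda>i _. mu i)"
  by (rule ext) (simp add: Pstar_def cond_prob_def)

lemma Pstar_in_Pmu:
  assumes "\<forall>i<n. 0 \<le> mu i \<and> mu i \<le> 1"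
  shows "Pstar n mu \<in> Pmu n mu"
proof -
  \<comment> \<open>Pmu asks for a kernel in [0,1] at every index, but mu is only assumed to lie there below n.\<close>
  define q where "q = (\<lambda>i (_::bool list). if i < n then mu i else 0)"
  have "cond_prob n q = cond_prob n (\<lambda>i _. mu i)"
    by (rule ext) (auto simp: cond_prob_def q_def intro!: prod.cong)
  then show ?thesis
    unfolding Pmu_def Pstar_eq_cond_prob using assms by (auto simp: q_def intro!: exI[of _ q])
qed

lemma prob_of_Omega_Pmu_le_Pstar:
  assumes "\<forall>i<n. 0 \<le> mu i \<and> mu i \<le> 1" and "P \<in> Pmu n mu"
  shows "prob_of P (Omega n c) \<le> prob_of (Pstar n mu) (Omega n c)"
proof -
  obtain q where q_unit: "\<forall>i h. 0 \<le> q i h \<and> q i h \<le> 1"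
    and q_mu: "\<forall>i<n. \<forall>h. length h = i \<longrightarrow> q i h \<le> mu i"
    and P_eq: "\<forall>w \<in> words n. P w = cond_prob n q w"
    using assms(2) unfolding Pmu_def by auto
  have "prob_of P (Omega n c) = prob_of (cond_prob n q) (Omega n c)"
    unfolding prob_of_def by (rule sum.cong) (auto simp: P_eq Omega_def)
  also have "\<dots> = prob_at_least n q c" by (rule prob_of_cond_prob_Omega)
  also have "\<dots> \<le> prob_at_least n (\<lambda>i _. mu i) c"
    using q_unit q_mu assms(1) by (intro prob_at_least_le_product) (auto simp: kernel_bounded_def)
  also have "\<dots> = prob_of (Pstar n mu) (Omega n c)"
    by (simp add: Pstar_eq_cond_prob prob_of_cond_prob_Omega)
  finally show ?thesis .
qed

theorem mainTheorem14:
  fixes n c :: nat and mu :: "nat \<Rightarrow> real"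
  assumes "n \<ge> 1"
    and "\<forall>i<n. 0 \<le> mu i \<and> mu i \<le> 1"
    and "c \<ge> 1"
  shows "Pstar n mu \<in> Pmu n mu
    \<and> (\<forall>P \<in> Pmu n mu. prob_of P (Omega n c) \<le> prob_of (Pstar n mu) (Omega n c))"
  using Pstar_in_Pmu[OF assms(2)] prob_of_Omega_Pmu_le_Pstar assms(2) by blast

end
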